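(* Assume the L-smoothness assumption and the $\mu$-convexity assumption with $\mu>0$, let $x^\star$ be the minimizer of $f$, suppose $\sigma_f^2=0$ (interpolation), and let $c\ge4\tau^2$, $\gamma_b>0$. Then with $\alpha:=\min\{\frac1{2cL},\gamma_b\}$, for every $T\ge1$ the FedSPS iterates satisfy $$\mathbb E\|\bar x_T-x^\star\|^2\le \frac{1}{\mu\alpha}(1-\mu\alpha)^T\|\bar x_0-x^\star\|^2.$$
   Context: Setting: integers $n\ge1$, $d\ge1$, $\tau\ge1$. For each $i\in[n]$, $\mathcal D_i$ is a probability distribution on $\Omega_i$, $F_i:\mathbb R^d\times\Omega_i\to\mathbb R$ with $F_i(\cdot,\xi)$ differentiable for $\xi\in\operatorname{supp}(\mathcal D_i)$; $f_i(x):=\mathbb E_{\xi\sim\mathcal D_i}F_i(x,\xi)$, $\mathbb E\nabla F_i(x,\xi)=\nabla f_i(x)$, $f:=\frac1n\sum_i f_i$. $F_i^\star:=\inf_{\xi\in\operatorname{supp}(\mathcal D_i),x}F_i(x,\xi)$ and $\ell_i^\star\le F_i^\star$ are given reals. FedSPS with parameters $c,\gamma_b>0$: $x_0^i=x_0$; at each $t$, client $i$ draws $\xi_t^i\sim\mathcal D_i$ independently of everything else, sets $g_t^i:=\nabla F_i(x_t^i,\xi_t^i)$, $\gamma_t^i:=\min\{\frac{F_i(x_t^i,\xi_t^i)-\ell_i^\star}{c\|g_t^i\|^2},\gamma_b\}$ (first term $+\infty$ if $g_t^i=0$); if $t+1$ is a multiple of $\tau$, $x_{t+1}^i:=\frac1n\sum_j(x_t^j-\gamma_t^jg_t^j)$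 for all $i$, else $x_{t+1}^i:=x_t^i-\gamma_t^ig_t^i$. $\bar x_t:=\frac1n\sum_i x_t^i$. L-smoothness assumption: $\|\nabla F_i(y,\xi)-\nabla F_i(x,\xi)\|\le L\|x-y\|$ for all $i$, $\xi\in\operatorname{supp}(\mathcal D_i)$, $x,y$. $\mu$-convexity assumption: $F_i(y,\xi)\ge F_i(x,\xi)+\langle\nabla F_i(x,\xi),y-x\rangle+\frac\mu2\|y-x\|^2$ for all $i,\xi,x,y$. $\sigma_f^2:=\frac1n\sum_i(f_i(x^\star)-\ell_i^\star)$. *)

theory Defs
  imports "HOL-Probability.Probability"
begin

text \<open>A sample path
  \<omega> :: nat \<times> nat \<Rightarrow> 'w assigns to (t,i) the sample \<xi>_t^i.
  F i x \<xi> is the loss F_i(x,\<xi>), G i x \<xi> its gradient in x, lstar i = \<ell>_i^*.\<close>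

definition fedsps_stepsize ::
  "(nat \<Rightarrow> 'a::real_inner \<Rightarrow> 'w \<Rightarrow> real) \<Rightarrow> (nat \<Rightarrow> 'a \<Rightarrow> 'w \<Rightarrow> 'a) \<Rightarrow> (nat \<Rightarrow> real)
    \<Rightarrow> real \<Rightarrow> real \<Rightarrow> nat \<Rightarrow> 'a \<Rightarrow> 'w \<Rightarrow> real" where
  "fedsps_stepsize F G lstar c gb i x \<xi> =
     (if G i x \<xi> = 0 then gb
      else min ((F i x \<xi> - lstar i) / (c * (norm (G i x \<xi>))\<^sup>2)) gb)"

fun fedsps_iter ::
  "nat \<Rightarrow> nat \<Rightarrow> (nat \<Rightarrow> 'a::real_inner \<Rightarrow> 'w \<Rightarrow> real) \<Rightarrow> (nat \<Rightarrow> 'a \<Rightarrow> 'w \<Rightarrow> 'a) \<Rightarrow> (nat \<Rightarrow> real)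
    \<Rightarrow> real \<Rightarrow> real \<Rightarrow> 'a \<Rightarrow> (nat \<times> nat \<Rightarrow> 'w) \<Rightarrow> nat \<Rightarrow> nat \<Rightarrow> 'a" where
  "fedsps_iter n \<tau> F G lstar c gb x0 \<omega> 0 = (\<lambda>i. x0)"
| "fedsps_iter n \<tau> F G lstar c gb x0 \<omega> (Suc t) =
     (let X = fedsps_iter n \<tau> F G lstar c gb x0 \<omega> t;
          u = (\<lambda>j. X j - fedsps_stepsize F G lstar c gb j (X j) (\<omega> (t, j)) *\<^sub>R G j (X j) (\<omega> (t, j)))
      in if Suc t mod \<tau> = 0 then (\<lambda>i. (1 / real n) *\<^sub>R (\<Sum>j<n. u j)) else u)"

definition fedsps_avg ::
  "nat \<Rightarrow> nat \<Rightarrow> (nat \<Rightarrow> 'a::real_inner \<Rightarrow> 'w \<Rightarrow> real) \<Rightarrow> (nat \<Rightarrow> 'a \<Rightarrow> 'w \<Rightarrow> 'a) \<Rightarrow> (nat \<Rightarrow> real)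
    \<Rightarrow> real \<Rightarrow> real \<Rightarrow> 'a \<Rightarrow> (nat \<times> nat \<Rightarrow> 'w) \<Rightarrow> nat \<Rightarrow> 'a" where
  "fedsps_avg n \<tau> F G lstar c gb x0 \<omega> t =
     (1 / real n) *\<^sub>R (\<Sum>i<n. fedsps_iter n \<tau> F G lstar c gb x0 \<omega> t i)"

end

theory Submission
  imports Defs
begin

text \<open>Under interpolation the optimum x* minimises almost every sampled loss F_i(., xi), at the
  value l_i*. For such a sample the Polyak step size lies between
  alpha = min (1/(2cL)) gamma_b (since ||g||^2 <= 2L (F - l*) by smoothness) and (F - l*)/(c ||g||^2),
  and strong convexity then makes every local step a contraction of ||x - x*||^2 by 1 - mu alpha.
  Averaging over the clients cannot increase the distance to x*, so the bound holds along almost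
  every sample path, and the expectation bound follows because 1/(mu alpha) >= 1.\<close>

lemma smooth_descent:
  fixes f :: "'a::real_inner \<Rightarrow> real" and g :: "'a \<Rightarrow> 'a"
  assumes deriv: "\<And>x. (f has_derivative (\<lambda>h. g x \<bullet> h)) (at x)"
    and lipschitz: "\<And>x y. norm (g y - g x) \<le> L * norm (x - y)"
  shows "f (x + h) \<le> f x + g x \<bullet> h + L / 2 * (norm h)\<^sup>2"
proof -
  define \<phi> where "\<phi> s = f (x + s *\<^sub>R h) - s * (g x \<bullet> h) - L / 2 * s\<^sup>2 * (norm h)\<^sup>2" for s :: real
  have \<phi>_deriv: "DERIV \<phi> s :> (g (x + s *\<^sub>R h) \<bullet> h - g x \<bullet> h - L * s * (norm h)\<^sup>2)" for s
  proof -
    have "((\<lambda>s. x + s *\<^sub>R h) has_derivative (\<lambda>d. d *\<^sub>R h)) (at s)"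
      by (auto intro!: derivative_eq_intros)
    from has_derivative_compose[OF this deriv]
    have "((\<lambda>s. f (x + s *\<^sub>R h)) has_field_derivative (g (x + s *\<^sub>R h) \<bullet> h)) (at s)"
      unfolding has_field_derivative_def
      by (rule has_derivative_eq_rhs) (auto simp: fun_eq_iff)
    then show ?thesis unfolding \<phi>_def
      by (auto intro!: derivative_eq_intros simp: power2_eq_square)
  qed
  have "\<phi> 1 \<le> \<phi> 0"
  proof (rule DERIV_nonpos_imp_nonincreasing[of 0 1])
    fix s :: real assume s: "0 \<le> s" "s \<le> 1"
    have "g (x + s *\<^sub>R h) \<bullet> h - g x \<bullet> h \<le> norm (g (x + s *\<^sub>R h) - g x) * norm h"
      by (metis inner_diff_left norm_cauchy_schwarz)
    also have "\<dots> \<le> L * norm (x - (x + s *\<^sub>R h)) * norm h"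
      by (rule mult_right_mono[OF lipschitz]) simp
    also have "\<dots> = L * s * (norm h)\<^sup>2" using s by (simp add: power2_eq_square)
    finally show "\<exists>y. DERIV \<phi> s :> y \<and> y \<le> 0" using \<phi>_deriv by (auto intro!: exI)
  qed simp
  then show ?thesis unfolding \<phi>_def by simp
qed

lemma strongly_convex_le_smooth:
  fixes f :: "'a::euclidean_space \<Rightarrow> real" and g :: "'a \<Rightarrow> 'a"
  assumes deriv: "\<And>x. (f has_derivative (\<lambda>h. g x \<bullet> h)) (at x)"
    and lipschitz: "\<And>x y. norm (g y - g x) \<le> L * norm (x - y)"
    and strconv: "\<And>x y. f y \<ge> f x + g x \<bullet> (y - x) + \<mu> / 2 * (norm (y - x))\<^sup>2"
  shows "\<mu> \<le> L"
proof -
  obtain h :: 'a where h: "h \<noteq> 0" using nonzero_Basis SOME_Basis by blast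
  have "f (0 + h) \<le> f 0 + g 0 \<bullet> h + L / 2 * (norm h)\<^sup>2"
    by (rule smooth_descent[OF deriv lipschitz])
  moreover have "f (0 + h) \<ge> f 0 + g 0 \<bullet> h + \<mu> / 2 * (norm h)\<^sup>2"
    using strconv[of 0 "0 + h"] by simp
  ultimately have "\<mu> * (norm h)\<^sup>2 \<le> L * (norm h)\<^sup>2" by simp
  then show ?thesis using h by simp
qed

lemma smooth_gradient_norm_le:
  fixes f :: "'a::real_inner \<Rightarrow> real" and g :: "'a \<Rightarrow> 'a"
  assumes deriv: "\<And>x. (f has_derivative (\<lambda>h. g x \<bullet> h)) (at x)"
    and lipschitz: "\<And>x y. norm (g y - g x) \<le> L * norm (x - y)"
    and lower: "\<And>x. l \<le> f x" and L: "L > 0"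
  shows "(norm (g x))\<^sup>2 \<le> 2 * L * (f x - l)"
proof -
  let ?h = "(- 1 / L) *\<^sub>R g x"
  have "l \<le> f (x + ?h)" by (rule lower)
  also have "\<dots> \<le> f x + g x \<bullet> ?h + L / 2 * (norm ?h)\<^sup>2"
    by (rule smooth_descent[OF deriv lipschitz])
  also have "\<dots> = f x - (norm (g x))\<^sup>2 / (2 * L)"
  proof -
    have "g x \<bullet> ?h = - (norm (g x))\<^sup>2 / L" by (simp add: power2_norm_eq_inner)
    moreover have "(norm ?h)\<^sup>2 = (norm (g x))\<^sup>2 / L\<^sup>2"
      using L by (simp add: power_mult_distrib power_divide)
    ultimately show ?thesis using L by (simp add: power2_eq_square field_simps)
  qed
  finally show ?thesis using L by (simp add: field_simps)
qed

text \<open>The first hypothesis is strong convexity between x and a minimiser xs, with Delta the gap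
  F(x) - F(xs).\<close>

lemma step_towards_minimiser_contracts:
  fixes g x xs :: "'a::real_inner"
  assumes strconv: "\<Delta> + \<mu> / 2 * (norm (x - xs))\<^sup>2 \<le> g \<bullet> (x - xs)"
    and gap: "0 \<le> \<Delta>" and mu: "0 \<le> \<mu>"
    and step_lower: "0 \<le> \<alpha>" "\<alpha> \<le> \<gamma>" and step_upper: "\<gamma> * (norm g)\<^sup>2 \<le> \<Delta>"
  shows "(norm (x - \<gamma> *\<^sub>R g - xs))\<^sup>2 \<le> (1 - \<mu> * \<alpha>) * (norm (x - xs))\<^sup>2"
proof -
  define r where "r = (norm (x - xs))\<^sup>2"
  have "\<gamma> \<ge> 0" "r \<ge> 0" using step_lower unfolding r_def by auto
  have "(norm (x - \<gamma> *\<^sub>R g - xs))\<^sup>2 = (norm ((x - xs) - \<gamma> *\<^sub>R g))\<^sup>2"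
    by (simp add: algebra_simps)
  also have "\<dots> = r - 2 * \<gamma> * (g \<bullet> (x - xs)) + \<gamma> * (\<gamma> * (norm g)\<^sup>2)"
    unfolding r_def power2_norm_eq_inner
    by (simp add: inner_diff_left inner_diff_right inner_commute algebra_simps)
  also have "\<dots> \<le> r - 2 * \<gamma> * (\<Delta> + \<mu> / 2 * r) + \<gamma> * \<Delta>"
    using \<open>\<gamma> \<ge> 0\<close> strconv step_upper unfolding r_def
    by (intro add_mono diff_mono mult_left_mono order.refl) auto
  also have "\<dots> = r - \<mu> * \<gamma> * r - \<gamma> * \<Delta>" by (simp add: algebra_simps)
  also have "\<dots> \<le> r - \<mu> * \<alpha> * r"
  proof -
    have "\<mu> * \<alpha> * r \<le> \<mu> * \<gamma> * r"
      using \<open>r \<ge> 0\<close> mu step_lower by (intro mult_right_mono mult_left_mono) auto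
    moreover have "\<gamma> * \<Delta> \<ge> 0" using \<open>\<gamma> \<ge> 0\<close> gap by simp
    ultimately show ?thesis by linarith
  qed
  finally show ?thesis unfolding r_def by (simp add: algebra_simps)
qed

lemma polyak_stepsize_bounds:
  fixes g :: "'a::real_normed_vector"
  assumes grad_bound: "(norm g)\<^sup>2 \<le> 2 * L * \<Delta>" and g: "g \<noteq> 0"
    and L: "L > 0" and c: "c \<ge> 1" and gb: "gb > 0"
  defines "\<gamma> \<equiv> min (\<Delta> / (c * (norm g)\<^sup>2)) gb"
  shows "min (1 / (2 * c * L)) gb \<le> \<gamma>" and "\<gamma> * (norm g)\<^sup>2 \<le> \<Delta>"
proof -
  have ng: "(norm g)\<^sup>2 > 0" using g by simp
  have "1 / (2 * c * L) \<le> \<Delta> / (c * (norm g)\<^sup>2)"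
    using grad_bound ng c L by (simp add: field_simps)
  then show "min (1 / (2 * c * L)) gb \<le> \<gamma>" unfolding \<gamma>_def by linarith
  have "0 < 2 * L * \<Delta>" using ng grad_bound by linarith
  then have "\<Delta> > 0" using L by (simp add: zero_less_mult_iff)
  then have "\<gamma> > 0" unfolding \<gamma>_def using ng c gb by simp
  have "\<gamma> * (norm g)\<^sup>2 \<le> \<gamma> * (c * (norm g)\<^sup>2)"
    using \<open>\<gamma> > 0\<close> ng c by (intro mult_left_mono) auto
  also have "\<dots> \<le> \<Delta>"
  proof -
    have "\<gamma> \<le> \<Delta> / (c * (norm g)\<^sup>2)" unfolding \<gamma>_def by simp
    then show ?thesis using ng c by (simp add: field_simps)
  qed
  finally show "\<gamma> * (norm g)\<^sup>2 \<le> \<Delta>" .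
qed

lemma fedsps_step_contracts:
  fixes F :: "nat \<Rightarrow> 'a::real_inner \<Rightarrow> 'w \<Rightarrow> real" and G :: "nat \<Rightarrow> 'a \<Rightarrow> 'w \<Rightarrow> 'a"
  assumes deriv: "\<And>x. ((\<lambda>y. F i y \<xi>) has_derivative (\<lambda>h. G i x \<xi> \<bullet> h)) (at x)"
    and lipschitz: "\<And>x y. norm (G i y \<xi> - G i x \<xi>) \<le> L * norm (x - y)"
    and strconv: "\<And>x y. F i y \<xi> \<ge> F i x \<xi> + G i x \<xi> \<bullet> (y - x) + \<mu> / 2 * (norm (y - x))\<^sup>2"
    and lower: "\<And>x. lstar i \<le> F i x \<xi>" and interpolating: "F i xs \<xi> = lstar i"
    and mu: "\<mu> > 0" and L: "L > 0" and c: "c \<ge> 1" and gb: "gb > 0"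
  shows "(norm (x - fedsps_stepsize F G lstar c gb i x \<xi> *\<^sub>R G i x \<xi> - xs))\<^sup>2
           \<le> (1 - \<mu> * min (1 / (2 * c * L)) gb) * (norm (x - xs))\<^sup>2"
proof -
  define g where "g = G i x \<xi>"
  define \<Delta> where "\<Delta> = F i x \<xi> - lstar i"
  have gap: "\<Delta> \<ge> 0" using lower[of x] unfolding \<Delta>_def by simp
  have sc: "\<Delta> + \<mu> / 2 * (norm (x - xs))\<^sup>2 \<le> g \<bullet> (x - xs)"
    using strconv[of x xs] interpolating
    unfolding g_def \<Delta>_def by (simp add: inner_diff_right norm_minus_commute)
  show ?thesis
  proof (cases "g = 0")
    case True
    then have "\<mu> / 2 * (norm (x - xs))\<^sup>2 \<le> 0" using sc gap by simp
    then have "x = xs" using mu by (simp add: mult_le_0_iff)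
    then show ?thesis using True unfolding g_def by simp
  next
    case False
    have "(norm g)\<^sup>2 \<le> 2 * L * \<Delta>"
      unfolding g_def \<Delta>_def by (rule smooth_gradient_norm_le[OF deriv lipschitz lower L])
    note step = polyak_stepsize_bounds[OF this False L c gb]
    have "min (1 / (2 * c * L)) gb \<ge> 0" using c L gb by simp
    from step_towards_minimiser_contracts[OF sc gap _ this step] mu False show ?thesis
      unfolding fedsps_stepsize_def g_def \<Delta>_def by simp
  qed
qed

lemma norm_average_minus_sq_le:
  fixes u :: "nat \<Rightarrow> 'a::real_normed_vector"
  assumes n: "n \<ge> 1" and bound: "\<And>j. j < n \<Longrightarrow> (norm (u j - xs))\<^sup>2 \<le> b"
  shows "(norm ((1 / real n) *\<^sub>R (\<Sum>j<n. u j) - xs))\<^sup>2 \<le> b"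
proof -
  have "(1 / real n) *\<^sub>R (\<Sum>j<n. u j) - xs = (1 / real n) *\<^sub>R (\<Sum>j<n. u j - xs)"
    using n by (simp add: sum_subtractf scaleR_diff_right scaleR_scaleR sum_constant_scaleR)
  then have "norm ((1 / real n) *\<^sub>R (\<Sum>j<n. u j) - xs) \<le> (1 / real n) * (\<Sum>j<n. norm (u j - xs))"
    by (simp add: norm_sum divide_right_mono)
  also have "\<dots> \<le> (1 / real n) * (\<Sum>j<n. sqrt b)"
    using bound real_le_rsqrt by (intro mult_left_mono sum_mono) auto
  also have "\<dots> = sqrt b" using n by simp
  finally have "norm ((1 / real n) *\<^sub>R (\<Sum>j<n. u j) - xs) \<le> sqrt b" .
  moreover have "b \<ge> 0" using bound[of 0] n by (meson zero_le_power2 order.trans less_le_trans zero_less_one)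
  ultimately show ?thesis by (metis norm_ge_zero power_mono real_sqrt_pow2)
qed

lemma fedsps_iter_dist_sq_le:
  assumes n: "n \<ge> 1" and q: "q \<ge> 0"
    and contraction: "\<And>t j x. t < T \<Longrightarrow> j < n \<Longrightarrow>
       (norm (x - fedsps_stepsize F G lstar c gb j x (\<omega> (t, j)) *\<^sub>R G j x (\<omega> (t, j)) - xs))\<^sup>2
         \<le> q * (norm (x - xs))\<^sup>2"
  shows "t \<le> T \<Longrightarrow> i < n \<Longrightarrow>
     (norm (fedsps_iter n \<tau> F G lstar c gb x0 \<omega> t i - xs))\<^sup>2 \<le> q ^ t * (norm (x0 - xs))\<^sup>2"
proof (induction t arbitrary: i)
  case 0
  then show ?case by simp
next
  case (Suc t)
  define X where "X = fedsps_iter n \<tau> F G lstar c gb x0 \<omega> t"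
  define u where "u = (\<lambda>j. X j - fedsps_stepsize F G lstar c gb j (X j) (\<omega> (t, j)) *\<^sub>R G j (X j) (\<omega> (t, j)))"
  have u_bound: "(norm (u j - xs))\<^sup>2 \<le> q ^ Suc t * (norm (x0 - xs))\<^sup>2" if "j < n" for j
  proof -
    have "(norm (u j - xs))\<^sup>2 \<le> q * (norm (X j - xs))\<^sup>2"
      unfolding u_def using contraction[of t j "X j"] Suc.prems that by simp
    also have "\<dots> \<le> q * (q ^ t * (norm (x0 - xs))\<^sup>2)"
      using Suc.IH[of j] Suc.prems that q unfolding X_def by (intro mult_left_mono) auto
    finally show ?thesis by simp
  qed
  have "fedsps_iter n \<tau> F G lstar c gb x0 \<omega> (Suc t) =
     (if Suc t mod \<tau> = 0 then (\<lambda>i. (1 / real n) *\<^sub>R (\<Sum>j<n. u j)) else u)"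
    unfolding u_def X_def by (simp add: Let_def)
  then show ?case
    using u_bound norm_average_minus_sq_le[OF n u_bound] Suc.prems by simp
qed

lemma polyak_rate_bounds:
  fixes \<mu> L c gb :: real
  assumes mu: "0 < \<mu>" "\<mu> \<le> L" and c: "c \<ge> 1" and gb: "gb > 0"
  shows "0 < \<mu> * min (1 / (2 * c * L)) gb" and "\<mu> * min (1 / (2 * c * L)) gb \<le> 1"
proof -
  have L: "L > 0" using mu by linarith
  then show "0 < \<mu> * min (1 / (2 * c * L)) gb" using mu c gb by simp
  have "1 / (2 * c * L) \<le> 1 / L" using c L by (simp add: field_simps)
  then have "min (1 / (2 * c * L)) gb \<le> 1 / L" by linarith
  then have "\<mu> * min (1 / (2 * c * L)) gb \<le> L * (1 / L)"
    using mu c gb L by (intro mult_mono) auto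
  then show "\<mu> * min (1 / (2 * c * L)) gb \<le> 1" using L by simp
qed

lemma fedsps_avg_dist_sq_le:
  fixes F :: "nat \<Rightarrow> 'a::real_inner \<Rightarrow> 'w \<Rightarrow> real" and G :: "nat \<Rightarrow> 'a \<Rightarrow> 'w \<Rightarrow> 'a"
  assumes n: "n \<ge> 1"
    and deriv: "\<And>t j x. t < T \<Longrightarrow> j < n \<Longrightarrow>
        ((\<lambda>y. F j y (\<omega> (t, j))) has_derivative (\<lambda>h. G j x (\<omega> (t, j)) \<bullet> h)) (at x)"
    and lipschitz: "\<And>t j x y. t < T \<Longrightarrow> j < n \<Longrightarrow>
        norm (G j y (\<omega> (t, j)) - G j x (\<omega> (t, j))) \<le> L * norm (x - y)"
    and strconv: "\<And>t j x y. t < T \<Longrightarrow> j < n \<Longrightarrow>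
        F j y (\<omega> (t, j)) \<ge> F j x (\<omega> (t, j)) + G j x (\<omega> (t, j)) \<bullet> (y - x) + \<mu> / 2 * (norm (y - x))\<^sup>2"
    and lower: "\<And>t j x. t < T \<Longrightarrow> j < n \<Longrightarrow> lstar j \<le> F j x (\<omega> (t, j))"
    and interpolating: "\<And>t j. t < T \<Longrightarrow> j < n \<Longrightarrow> F j xs (\<omega> (t, j)) = lstar j"
    and mu: "0 < \<mu>" "\<mu> \<le> L" and c: "c \<ge> 1" and gb: "gb > 0"
  shows "(norm (fedsps_avg n \<tau> F G lstar c gb x0 \<omega> T - xs))\<^sup>2
           \<le> (1 - \<mu> * min (1 / (2 * c * L)) gb) ^ T * (norm (x0 - xs))\<^sup>2"
proof -
  have L: "L > 0" using mu by linarith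
  have rate: "0 \<le> 1 - \<mu> * min (1 / (2 * c * L)) gb" using polyak_rate_bounds(2)[OF mu c gb] by simp
  have "(norm (x - fedsps_stepsize F G lstar c gb j x (\<omega> (t, j)) *\<^sub>R G j x (\<omega> (t, j)) - xs))\<^sup>2
          \<le> (1 - \<mu> * min (1 / (2 * c * L)) gb) * (norm (x - xs))\<^sup>2" if tj: "t < T" "j < n" for t j x
    by (rule fedsps_step_contracts[where F=F and G=G and i=j and \<xi>="\<omega> (t, j)" and L=L and \<mu>=\<mu> and lstar=lstar and xs=xs, OF deriv[OF tj] lipschitz[OF tj] strconv[OF tj] lower[OF tj]
          interpolating[OF tj] mu(1) L c gb])
  from fedsps_iter_dist_sq_le[OF n rate this order.refl]
  have "(norm (fedsps_iter n \<tau> F G lstar c gb x0 \<omega> T i - xs))\<^sup>2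
          \<le> (1 - \<mu> * min (1 / (2 * c * L)) gb) ^ T * (norm (x0 - xs))\<^sup>2" if "i < n" for i
    using that by blast
  then show ?thesis unfolding fedsps_avg_def by (rule norm_average_minus_sq_le[OF n])
qed

lemma AE_eq_of_integral_eq_lower_bound:
  fixes f :: "'a \<Rightarrow> real"
  assumes "prob_space M" and f: "integrable M f" and lower: "\<And>\<xi>. \<xi> \<in> space M \<Longrightarrow> l \<le> f \<xi>"
    and mean: "integral\<^sup>L M f = l"
  shows "AE \<xi> in M. f \<xi> = l"
proof -
  interpret prob_space M by fact
  have "integral\<^sup>L M (\<lambda>\<xi>. f \<xi> - l) = 0" using f mean by (simp add: prob_space)
  moreover have "integrable M (\<lambda>\<xi>. f \<xi> - l)" using f by simp
  moreover have "AE \<xi> in M. 0 \<le> f \<xi> - l" using lower by simp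
  ultimately have "AE \<xi> in M. f \<xi> - l = 0" using integral_nonneg_eq_0_iff_AE by blast
  then show ?thesis by simp
qed

lemma AE_eq_of_mean_gap_eq_zero:
  fixes f :: "nat \<Rightarrow> 'a \<Rightarrow> real"
  assumes prob: "\<And>i. i < n \<Longrightarrow> prob_space (M i)"
    and integrable: "\<And>i. i < n \<Longrightarrow> integrable (M i) (f i)"
    and lower: "\<And>i \<xi>. i < n \<Longrightarrow> \<xi> \<in> space (M i) \<Longrightarrow> l i \<le> f i \<xi>"
    and gap: "(1 / real n) * (\<Sum>i<n. integral\<^sup>L (M i) (f i) - l i) = 0" and i: "i < n"
  shows "AE \<xi> in M i. f i \<xi> = l i"
proof (rule AE_eq_of_integral_eq_lower_bound[OF prob[OF i] integrable[OF i] lower[OF i]])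
  have gap_nonneg: "integral\<^sup>L (M j) (f j) - l j \<ge> 0" if j: "j < n" for j
  proof -
    interpret prob_space "M j" using prob[OF j] .
    have "integral\<^sup>L (M j) (\<lambda>_. l j) \<le> integral\<^sup>L (M j) (f j)"
      using integrable[OF j] lower[OF j] by (intro integral_mono) auto
    then show ?thesis by (simp add: prob_space)
  qed
  have "(\<Sum>i<n. integral\<^sup>L (M i) (f i) - l i) = 0" using gap i by simp
  then show "integral\<^sup>L (M i) (f i) = l i"
    using sum_nonneg_eq_0_iff[of "{..<n}" "\<lambda>i. integral\<^sup>L (M i) (f i) - l i"] gap_nonneg i by simp
qed

lemma AE_PiM_all_components:
  assumes "finite I" and prob: "\<And>i. i \<in> I \<Longrightarrow> prob_space (M i)"
    and ae: "\<And>i. i \<in> I \<Longrightarrow> AE x in M i. P i x"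
  shows "AE \<omega> in PiM I M. \<forall>i\<in>I. P i (\<omega> i)"
  using \<open>finite I\<close> by (rule AE_finite_allI) (rule AE_PiM_component[OF prob _ ae])

lemma nn_integral_le_const_AE:
  assumes "prob_space M" and "AE \<omega> in M. f \<omega> \<le> b"
  shows "(\<integral>\<^sup>+ \<omega>. ennreal (f \<omega>) \<partial>M) \<le> ennreal b"
proof -
  interpret prob_space M by fact
  have "(\<integral>\<^sup>+ \<omega>. ennreal (f \<omega>) \<partial>M) \<le> (\<integral>\<^sup>+ \<omega>. ennreal b \<partial>M)"
    using assms(2) by (intro nn_integral_mono_AE) (auto intro: ennreal_leI)
  then show ?thesis by (simp add: emeasure_space_1)
qed

theorem corollary1:
  fixes n \<tau> T :: nat
    and D :: "nat \<Rightarrow> 'w measure"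
    and F :: "nat \<Rightarrow> 'a::euclidean_space \<Rightarrow> 'w \<Rightarrow> real"
    and G :: "nat \<Rightarrow> 'a \<Rightarrow> 'w \<Rightarrow> 'a"
    and lstar :: "nat \<Rightarrow> real"
    and L \<mu> c gb :: real
    and x0 xstar :: 'a
  assumes n: "n \<ge> 1" and tau: "\<tau> \<ge> 1" and T: "T \<ge> 1"
    and prob: "\<And>i. i < n \<Longrightarrow> prob_space (D i)"
    and grad: "\<And>i x \<xi>. i < n \<Longrightarrow> \<xi> \<in> space (D i) \<Longrightarrow>
                 ((\<lambda>y. F i y \<xi>) has_derivative (\<lambda>h. G i x \<xi> \<bullet> h)) (at x)"
    and intF: "\<And>i x. i < n \<Longrightarrow> integrable (D i) (\<lambda>\<xi>. F i x \<xi>)"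
    and intG: "\<And>i x. i < n \<Longrightarrow> integrable (D i) (\<lambda>\<xi>. G i x \<xi>)"
    and unbiased: "\<And>i x. i < n \<Longrightarrow>
        ((\<lambda>y. integral\<^sup>L (D i) (\<lambda>\<xi>. F i y \<xi>)) has_derivative
           (\<lambda>h. integral\<^sup>L (D i) (\<lambda>\<xi>. G i x \<xi>) \<bullet> h)) (at x)"
    and lstar_le: "\<And>i x \<xi>. i < n \<Longrightarrow> \<xi> \<in> space (D i) \<Longrightarrow> lstar i \<le> F i x \<xi>"
    and smooth: "\<And>i x y \<xi>. i < n \<Longrightarrow> \<xi> \<in> space (D i) \<Longrightarrow>
                   norm (G i y \<xi> - G i x \<xi>) \<le> L * norm (x - y)"
    and strconv: "\<And>i x y \<xi>. i < n \<Longrightarrow> \<xi> \<in> space (D i) \<Longrightarrow>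
                   F i y \<xi> \<ge> F i x \<xi> + G i x \<xi> \<bullet> (y - x) + \<mu> / 2 * (norm (y - x))\<^sup>2"
    and mu: "\<mu> > 0"
    and minimizer: "\<And>y. (1 / real n) * (\<Sum>i<n. integral\<^sup>L (D i) (\<lambda>\<xi>. F i xstar \<xi>))
                        \<le> (1 / real n) * (\<Sum>i<n. integral\<^sup>L (D i) (\<lambda>\<xi>. F i y \<xi>))"
    and interp: "(1 / real n) * (\<Sum>i<n. integral\<^sup>L (D i) (\<lambda>\<xi>. F i xstar \<xi>) - lstar i) = 0"
    and c: "c \<ge> 4 * (real \<tau>)\<^sup>2"
    and gb: "gb > 0"
  shows "let \<alpha> = min (1 / (2 * c * L)) gb in
         (\<integral>\<^sup>+ \<omega>. ennreal ((norm (fedsps_avg n \<tau> F G lstar c gb x0 \<omega> T - xstar))\<^sup>2)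
            \<partial>(PiM ({..<T} \<times> {..<n}) (\<lambda>(t, i). D i)))
         \<le> ennreal (1 / (\<mu> * \<alpha>) * (1 - \<mu> * \<alpha>) ^ T *
                    (norm (x0 - xstar))\<^sup>2)"
proof -
  define \<alpha> where "\<alpha> = min (1 / (2 * c * L)) gb"
  define M where "M = PiM ({..<T} \<times> {..<n}) (\<lambda>(t, i). D i)"
  define bound where "bound = (1 - \<mu> * \<alpha>) ^ T * (norm (x0 - xstar))\<^sup>2"
  have "(real \<tau>)\<^sup>2 \<ge> 1" using tau by simp
  then have c1: "c \<ge> 1" using c by linarith
  have n0: "0 < n" using n by simp
  obtain \<xi>0 where \<xi>0: "\<xi>0 \<in> space (D 0)" using prob_space.not_empty[OF prob[OF n0]] by blast
  have muL: "\<mu> \<le> L"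
    by (rule strongly_convex_le_smooth[OF grad[OF n0 \<xi>0] smooth[OF n0 \<xi>0] strconv[OF n0 \<xi>0]])
  interpret M: prob_space M unfolding M_def using prob by (intro prob_space_PiM) auto
  have "AE \<xi> in D j. F j xstar \<xi> = lstar j" if "j < n" for j
    using prob intF lstar_le interp that by (rule AE_eq_of_mean_gap_eq_zero)
  then have good: "AE \<omega> in M. \<forall>k\<in>{..<T} \<times> {..<n}. F (snd k) xstar (\<omega> k) = lstar (snd k)"
    unfolding M_def using prob
    by (intro AE_PiM_all_components[where P="\<lambda>k \<xi>. F (snd k) xstar \<xi> = lstar (snd k)"])
       (auto split: prod.splits)
  have pathwise: "(norm (fedsps_avg n \<tau> F G lstar c gb x0 \<omega> T - xstar))\<^sup>2 \<le> bound"
    if "\<omega> \<in> space M" "\<forall>k\<in>{..<T} \<times> {..<n}. F (snd k) xstar (\<omega> k) = lstar (snd k)" for \<omega>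
    using that unfolding bound_def \<alpha>_def M_def space_PiM
    by (intro fedsps_avg_dist_sq_le[OF n] grad smooth strconv lstar_le mu muL c1 gb) auto
  have slack: "bound \<le> 1 / (\<mu> * \<alpha>) * bound"
  proof -
    have "0 < \<mu> * \<alpha>" "\<mu> * \<alpha> \<le> 1"
      unfolding \<alpha>_def by (fact polyak_rate_bounds[OF mu muL c1 gb])+
    then have "0 \<le> bound" "1 \<le> 1 / (\<mu> * \<alpha>)" unfolding bound_def by simp_all
    then show ?thesis using mult_right_mono[of 1] by fastforce
  qed
  have "AE \<omega> in M. (norm (fedsps_avg n \<tau> F G lstar c gb x0 \<omega> T - xstar))\<^sup>2 \<le> 1 / (\<mu> * \<alpha>) * bound"
    using good AE_space by eventually_elim (blast intro: order_trans[OF pathwise slack])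
  from nn_integral_le_const_AE[OF M.prob_space_axioms this]
  show ?thesis unfolding Let_def \<alpha>_def M_def bound_def by (simp add: mult.assoc)
qed

end
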